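(* Let $s_n$ ($n\ge1$) be the number of saturated secondary structures on $[1,n]$ and $S(z)=\sum_{n\ge1}s_nz^n$. Then $S(z)$ satisfies the algebraic equation $$-S^3z^4+z(1+z)-S^2z^2(z^2-2)+S(z^2-1)=0 .$$
   Context: A secondary structure on $[1,n]$ (with minimum hairpin size $\theta=1$) is a set $S$ of pairs $(i,j)$ of integers with $1\le i<j\le n$ such that: (i) there are no $(i,j),(k,\ell)\in S$ with $i<k<j<\ell$; (ii) every position of $[1,n]$ belongs to at most one pair of $S$; (iii) $j-i>1$ for every $(i,j)\in S$. Any position may pair with any other. A secondary structure $S$ on $[1,n]$ is saturated if there is no pair $(i,j)\notin S$ with $1\le i<j\le n$ such that $S\cup\{(i,j)\}$ is again a secondary structure on $[1,n]$. *)

theory Defs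
  imports "HOL-Computational_Algebra.Formal_Power_Series"
begin

text \<open>Secondary structures on [1,n] with minimum hairpin size 1.\<close>
definition secondary_structure :: "nat \<Rightarrow> (nat \<times> nat) set \<Rightarrow> bool" where
  "secondary_structure n S \<longleftrightarrow>
     (\<forall>(i, j) \<in> S. 1 \<le> i \<and> i < j \<and> j \<le> n) \<and>
     (\<nexists>i j k l. (i, j) \<in> S \<and> (k, l) \<in> S \<and> i < k \<and> k < j \<and> j < l) \<and>
     (\<forall>p \<in> S. \<forall>q \<in> S. p \<noteq> q \<longrightarrow> {fst p, snd p} \<inter> {fst q, snd q} = {}) \<and>
     (\<forall>(i, j) \<in> S. j - i > 1)"

definition saturated :: "nat \<Rightarrow> (nat \<times> nat) set \<Rightarrow> bool" where
  "saturated n S \<longleftrightarrow> secondary_structure n S \<and>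
     \<not> (\<exists>i j. 1 \<le> i \<and> i < j \<and> j \<le> n \<and> (i, j) \<notin> S \<and>
             secondary_structure n (insert (i, j) S))"

definition num_saturated :: "nat \<Rightarrow> nat" where
  "num_saturated n = card {S. saturated n S}"

definition sat_gf :: "int fps" where
  "sat_gf = Abs_fps (\<lambda>n. if n = 0 then 0 else int (num_saturated n))"

end

theory Submission
  imports Defs
begin

text \<open>
  We work with structures on an arbitrary interval [a, a+n) of positions, so that the
  pieces produced by a decomposition are again structures of the same kind. Saturation
  is characterised combinatorially: two unpaired positions at distance at least 2 must be
  separated by a crossing arc. Besides the saturated structures we count the auxiliary
  class of saturated structures in which every unpaired position lies beneath some arc.

  Looking at the first position a of a saturated structure there are three cases:
  a and a+1 unpaired, a unpaired but a+1 paired, or a paired with some a+m+1; in the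
  last case the arc splits the structure into a saturated structure inside the arc and
  one to its right, and conversely any two such pieces glue together. In the first two
  cases the remaining positions form a member of the auxiliary class, whose own first
  position is always paired. This yields recursions for both counts; they do not depend
  on the offset a, so the generating function S of saturated structures and the
  generating function C of the auxiliary class satisfy
  C = 1 + X^2 S C and 1 + S = 1 + X^2 S (1 + S) + (X + X^2) C.
  Eliminating C gives the cubic equation for S.
\<close>

section \<open>Secondary structures on an interval\<close>

definition struct_on :: "nat \<Rightarrow> nat \<Rightarrow> (nat \<times> nat) set \<Rightarrow> bool" where
  "struct_on a n S \<longleftrightarrow>
     (\<forall>(i, j) \<in> S. a \<le> i \<and> i + 1 < j \<and> j < a + n) \<and>
     (\<forall>(i, j) \<in> S. \<forall>(k, l) \<in> S. (i, j) \<noteq> (k, l) \<longrightarrow> i \<noteq> k \<and> i \<noteq> l \<and> j \<noteq> k \<and> j \<noteq> l) \<and>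
     (\<forall>(i, j) \<in> S. \<forall>(k, l) \<in> S. \<not> (i < k \<and> k < j \<and> j < l))"

lemma struct_onD:
  assumes "struct_on a n S" "(i, j) \<in> S"
  shows "a \<le> i" "i + 1 < j" "j < a + n"
  using assms unfolding struct_on_def by auto

lemma struct_on_disjoint:
  assumes "struct_on a n S" "(i, j) \<in> S" "(k, l) \<in> S" "(i, j) \<noteq> (k, l)"
  shows "i \<noteq> k \<and> i \<noteq> l \<and> j \<noteq> k \<and> j \<noteq> l"
  using assms unfolding struct_on_def by blast

lemma struct_on_noncrossing:
  assumes "struct_on a n S" "(i, j) \<in> S" "(k, l) \<in> S"
  shows "\<not> (i < k \<and> k < j \<and> j < l)"
  using assms unfolding struct_on_def by blast

lemma struct_onI:
  assumes "\<And>i j. (i, j) \<in> S \<Longrightarrow> a \<le> i \<and> i + 1 < j \<and> j < a + n"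
    and "\<And>i j k l. (i, j) \<in> S \<Longrightarrow> (k, l) \<in> S \<Longrightarrow> (i, j) \<noteq> (k, l) \<Longrightarrow>
           i \<noteq> k \<and> i \<noteq> l \<and> j \<noteq> k \<and> j \<noteq> l"
    and "\<And>i j k l. (i, j) \<in> S \<Longrightarrow> (k, l) \<in> S \<Longrightarrow> \<not> (i < k \<and> k < j \<and> j < l)"
  shows "struct_on a n S"
  using assms unfolding struct_on_def by blast

lemma secondary_structure_iff: "secondary_structure n S \<longleftrightarrow> struct_on 1 n S"
proof -
  have bounds: "(\<forall>(i, j) \<in> S. 1 \<le> i \<and> i < j \<and> j \<le> n) \<and> (\<forall>(i, j) \<in> S. j - i > 1) \<longleftrightarrow>
      (\<forall>(i, j) \<in> S. 1 \<le> i \<and> i + 1 < j \<and> j < 1 + n)"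
  proof -
    have "(1 \<le> i \<and> i < j \<and> j \<le> n) \<and> j - i > 1 \<longleftrightarrow> 1 \<le> i \<and> i + 1 < j \<and> j < 1 + n"
      for i j :: nat
      by auto
    then show ?thesis by (simp add: Ball_def) blast
  qed
  have disjoint: "(\<forall>p \<in> S. \<forall>q \<in> S. p \<noteq> q \<longrightarrow> {fst p, snd p} \<inter> {fst q, snd q} = {}) \<longleftrightarrow>
      (\<forall>(i, j) \<in> S. \<forall>(k, l) \<in> S. (i, j) \<noteq> (k, l) \<longrightarrow> i \<noteq> k \<and> i \<noteq> l \<and> j \<noteq> k \<and> j \<noteq> l)"
    by (simp add: Ball_def, blast)
  have noncrossing: "(\<nexists>i j k l. (i, j) \<in> S \<and> (k, l) \<in> S \<and> i < k \<and> k < j \<and> j < l) \<longleftrightarrow>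
      (\<forall>(i, j) \<in> S. \<forall>(k, l) \<in> S. \<not> (i < k \<and> k < j \<and> j < l))"
    by (simp add: Ball_def) blast
  show ?thesis
    unfolding secondary_structure_def struct_on_def disjoint noncrossing bounds[symmetric] by argo
qed

lemma struct_on_mono:
  assumes "struct_on a n S" "T \<subseteq> S" "\<And>p q. (p, q) \<in> T \<Longrightarrow> b \<le> p \<and> q < b + l"
  shows "struct_on b l T"
proof (rule struct_onI)
  fix i j assume "(i, j) \<in> T"
  then show "b \<le> i \<and> i + 1 < j \<and> j < b + l"
    using assms struct_onD[OF assms(1), of i j] by blast
qed (use assms struct_on_disjoint struct_on_noncrossing in blast)+

lemma finite_struct_on: "finite {S. struct_on a n S}"
proof (rule finite_subset)
  have "S \<subseteq> {a..<a + n} \<times> {a..<a + n}" if S: "struct_on a n S" for S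
  proof (rule subrelI)
    fix i j assume "(i, j) \<in> S"
    from struct_onD[OF S this] show "(i, j) \<in> {a..<a + n} \<times> {a..<a + n}" by auto
  qed
  then show "{S. struct_on a n S} \<subseteq> Pow ({a..<a + n} \<times> {a..<a + n})"
    by blast
qed simp

section \<open>Saturation\<close>

definition unpaired :: "(nat \<times> nat) set \<Rightarrow> nat \<Rightarrow> bool" where
  "unpaired S x \<longleftrightarrow> (\<forall>p q. (p, q) \<in> S \<longrightarrow> p \<noteq> x \<and> q \<noteq> x)"

lemma unpaired_mono: "unpaired S x \<Longrightarrow> T \<subseteq> S \<Longrightarrow> unpaired T x"
  unfolding unpaired_def by blast

definition crossed :: "(nat \<times> nat) set \<Rightarrow> nat \<Rightarrow> nat \<Rightarrow> bool" where
  "crossed S i k \<longleftrightarrow> (\<exists>p q. (p, q) \<in> S \<and> ((p < i \<and> i < q \<and> q < k) \<or> (i < p \<and> p < k \<and> k < q)))"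

lemma crossed_mono: "crossed T i k \<Longrightarrow> T \<subseteq> S \<Longrightarrow> crossed S i k"
  unfolding crossed_def by blast

definition covered :: "(nat \<times> nat) set \<Rightarrow> nat \<Rightarrow> bool" where
  "covered S x \<longleftrightarrow> (\<exists>p q. (p, q) \<in> S \<and> p < x \<and> x < q)"

text \<open>Saturated structures on an interval, characterised by the fact that no further arc can
  be added: any two unpaired positions at distance at least 2 are separated by a crossing arc.\<close>

definition saturated_on :: "nat \<Rightarrow> nat \<Rightarrow> (nat \<times> nat) set \<Rightarrow> bool" where
  "saturated_on a n S \<longleftrightarrow> struct_on a n S \<and>
     (\<forall>i k. a \<le> i \<longrightarrow> i + 1 < k \<longrightarrow> k < a + n \<longrightarrow> unpaired S i \<longrightarrow> unpaired S k \<longrightarrow> crossed S i k)"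

lemma struct_on_insert:
  assumes "struct_on a n S" "a \<le> i" "i < k" "k < a + n" "(i, k) \<notin> S"
  shows "struct_on a n (insert (i, k) S) \<longleftrightarrow>
           i + 1 < k \<and> unpaired S i \<and> unpaired S k \<and> \<not> crossed S i k"
proof
  assume ins: "struct_on a n (insert (i, k) S)"
  have "unpaired S i \<and> unpaired S k"
    unfolding unpaired_def using struct_on_disjoint[OF ins, of i k] assms(5) by fastforce
  moreover have "\<not> crossed S i k"
    unfolding crossed_def using struct_on_noncrossing[OF ins, of i k] struct_on_noncrossing[OF ins, of _ _ i k]
    by blast
  ultimately show "i + 1 < k \<and> unpaired S i \<and> unpaired S k \<and> \<not> crossed S i k"
    using struct_onD[OF ins, of i k] by blast
next
  assume new: "i + 1 < k \<and> unpaired S i \<and> unpaired S k \<and> \<not> crossed S i k"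
  show "struct_on a n (insert (i, k) S)"
  proof (rule struct_onI)
    fix p q assume "(p, q) \<in> insert (i, k) S"
    then show "a \<le> p \<and> p + 1 < q \<and> q < a + n"
      using struct_onD[OF assms(1), of p q] new assms(2,4) by auto
  next
    fix p q r t assume "(p, q) \<in> insert (i, k) S" "(r, t) \<in> insert (i, k) S" "(p, q) \<noteq> (r, t)"
    then show "p \<noteq> r \<and> p \<noteq> t \<and> q \<noteq> r \<and> q \<noteq> t"
      using struct_on_disjoint[OF assms(1), of p q r t] new unfolding unpaired_def by auto
  next
    fix p q r t assume "(p, q) \<in> insert (i, k) S" "(r, t) \<in> insert (i, k) S"
    then show "\<not> (p < r \<and> r < q \<and> q < t)"
      using struct_on_noncrossing[OF assms(1), of p q r t] new unfolding crossed_def by auto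
  qed
qed

lemma saturated_iff: "saturated n S \<longleftrightarrow> saturated_on 1 n S"
proof (cases "struct_on 1 n S")
  case True
  have "(\<exists>i k. 1 \<le> i \<and> i < k \<and> k \<le> n \<and> (i, k) \<notin> S \<and> struct_on 1 n (insert (i, k) S)) \<longleftrightarrow>
        (\<exists>i k. 1 \<le> i \<and> i + 1 < k \<and> k < 1 + n \<and> unpaired S i \<and> unpaired S k \<and> \<not> crossed S i k)"
    (is "?extensible \<longleftrightarrow> ?free_pair")
  proof
    assume ?extensible
    then show ?free_pair using struct_on_insert[OF True] by (auto simp: less_Suc_eq_le)
  next
    assume ?free_pair
    then obtain i k where ik: "1 \<le> i" "i + 1 < k" "k < 1 + n" "unpaired S i" "unpaired S k"
      "\<not> crossed S i k" by blast
    then have "(i, k) \<notin> S" unfolding unpaired_def by fast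
    moreover have "struct_on 1 n (insert (i, k) S)"
      using struct_on_insert[OF True, of i k] ik \<open>(i, k) \<notin> S\<close> by simp
    ultimately show ?extensible using ik by (intro exI[of _ i] exI[of _ k]) auto
  qed
  then show ?thesis
    unfolding saturated_def saturated_on_def secondary_structure_iff by blast
qed (simp add: saturated_def saturated_on_def secondary_structure_iff)

lemma saturated_on_struct: "saturated_on a n S \<Longrightarrow> struct_on a n S"
  unfolding saturated_on_def by blast

lemma saturated_onD:
  "saturated_on a n S \<Longrightarrow> a \<le> i \<Longrightarrow> i + 1 < k \<Longrightarrow> k < a + n \<Longrightarrow> unpaired S i \<Longrightarrow> unpaired S k \<Longrightarrow>
   crossed S i k"
  unfolding saturated_on_def by blast

lemma saturated_onI:
  "struct_on a n S \<Longrightarrow>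
   (\<And>i k. a \<le> i \<Longrightarrow> i + 1 < k \<Longrightarrow> k < a + n \<Longrightarrow> unpaired S i \<Longrightarrow> unpaired S k \<Longrightarrow> crossed S i k) \<Longrightarrow>
   saturated_on a n S"
  unfolding saturated_on_def by blast

lemma saturated_on_short: "n \<le> 1 \<Longrightarrow> saturated_on a n S \<longleftrightarrow> S = {}"
proof
  assume "n \<le> 1" "saturated_on a n S"
  then show "S = {}" using struct_onD[OF saturated_on_struct] by fastforce
next
  assume "n \<le> 1" "S = {}"
  moreover have "struct_on a n {}" by (rule struct_onI) auto
  ultimately show "saturated_on a n S" by (auto intro: saturated_onI)
qed

definition unpaired_covered :: "nat \<Rightarrow> nat \<Rightarrow> (nat \<times> nat) set \<Rightarrow> bool" where
  "unpaired_covered a n S \<longleftrightarrow> (\<forall>x. a \<le> x \<longrightarrow> x < a + n \<longrightarrow> unpaired S x \<longrightarrow> covered S x)"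

definition saturated_covered :: "nat \<Rightarrow> nat \<Rightarrow> (nat \<times> nat) set \<Rightarrow> bool" where
  "saturated_covered a n S \<longleftrightarrow> saturated_on a n S \<and> unpaired_covered a n S"

section \<open>The first position is unpaired\<close>

lemma first_position_paired:
  assumes "saturated_covered a n S" "0 < n"
  shows "\<not> unpaired S a"
proof
  assume "unpaired S a"
  then have "covered S a" using assms unfolding saturated_covered_def unpaired_covered_def by auto
  then obtain p q where pq: "(p, q) \<in> S" "p < a" unfolding covered_def by blast
  have "struct_on a n S" using assms(1) by (simp add: saturated_covered_def saturated_on_struct)
  from struct_onD(1)[OF this pq(1)] pq(2) show False by simp
qed

lemma crossed_from_left:
  assumes "\<And>p q. (p, q) \<in> S \<Longrightarrow> i < p"
  shows "crossed S i k \<longleftrightarrow> covered S k"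
proof -
  have "(p < i \<and> i < q \<and> q < k) \<or> (i < p \<and> p < k \<and> k < q) \<longleftrightarrow> p < k \<and> k < q"
    if "(p, q) \<in> S" for p q
    using assms[OF that] by auto
  then show ?thesis unfolding crossed_def covered_def by blast
qed

lemma drop_unpaired_prefix:
  assumes d: "d = 1 \<or> d = 2" and n: "2 \<le> n"
    and sat: "saturated_on a n S" and ua: "unpaired S a" and ua1: "unpaired S (a + 1) \<longleftrightarrow> d = 2"
  shows "saturated_covered (a + d) (n - d) S"
proof -
  have S: "struct_on a n S" using sat by (rule saturated_on_struct)
  have right: "a + d \<le> p" if pq: "(p, q) \<in> S" for p q
  proof -
    have "a \<le> p" using struct_onD(1)[OF S pq] .
    moreover have "p \<noteq> a" using ua pq unfolding unpaired_def by auto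
    moreover have "d = 2 \<Longrightarrow> p \<noteq> a + 1" using ua1 pq unfolding unpaired_def by auto
    ultimately show ?thesis using d by auto
  qed
  have "struct_on (a + d) (n - d) S"
  proof (rule struct_on_mono[OF S subset_refl])
    fix p q assume "(p, q) \<in> S"
    then show "a + d \<le> p \<and> q < a + d + (n - d)"
      using right struct_onD(3)[OF S \<open>(p, q) \<in> S\<close>] d n by auto
  qed
  moreover have "crossed S i k"
    if "a + d \<le> i" "i + 1 < k" "k < a + d + (n - d)" "unpaired S i" "unpaired S k" for i k
    using saturated_onD[OF sat _ that(2) _ that(4,5)] that(1,3) d n by auto
  moreover have "covered S x" if x: "a + d \<le> x" "x < a + d + (n - d)" "unpaired S x" for x
  proof -
    have "a + 1 < x" using x ua1 d by (cases "x = a + 1") auto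
    then have "crossed S a x" using saturated_onD[OF sat _ _ _ ua x(3)] x(2) d n by auto
    moreover have "a < p" if "(p, q) \<in> S" for p q using right[OF that] d by auto
    ultimately show ?thesis using crossed_from_left[of S a x] by blast
  qed
  ultimately show "saturated_covered (a + d) (n - d) S"
    unfolding saturated_covered_def unpaired_covered_def by (blast intro: saturated_onI)
qed

lemma extend_by_unpaired_prefix:
  assumes d: "d = 1 \<or> d = 2" and n: "2 \<le> n" and R: "saturated_covered (a + d) (n - d) S"
  shows "saturated_on a n S" and "unpaired S a" and "unpaired S (a + 1) \<longleftrightarrow> d = 2"
proof -
  have sat': "saturated_on (a + d) (n - d) S" and cov: "unpaired_covered (a + d) (n - d) S"
    using R by (simp_all add: saturated_covered_def)
  have S': "struct_on (a + d) (n - d) S" using sat' by (rule saturated_on_struct)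
  have right: "a + d \<le> p" if "(p, q) \<in> S" for p q using struct_onD[OF S' that] by simp
  have prefix_unpaired: "unpaired S x" if "x < a + d" for x
    unfolding unpaired_def using struct_onD[OF S'] that by fastforce
  show "unpaired S a" using prefix_unpaired d by auto
  show "unpaired S (a + 1) \<longleftrightarrow> d = 2"
    using prefix_unpaired[of "a + 1"] first_position_paired[OF R] d n by auto
  have S: "struct_on a n S"
  proof (rule struct_on_mono[OF S' subset_refl])
    fix p q assume "(p, q) \<in> S"
    then show "a \<le> p \<and> q < a + n" using struct_onD[OF S' \<open>(p, q) \<in> S\<close>] d n by auto
  qed
  show "saturated_on a n S"
  proof (rule saturated_onI[OF S])
    fix i k assume ik: "a \<le> i" "i + 1 < k" "k < a + n" "unpaired S i" "unpaired S k"
    then have k: "a + d \<le> k" "k < a + d + (n - d)" using d n by auto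
    show "crossed S i k"
    proof (cases "a + d \<le> i")
      case True
      then show ?thesis using saturated_onD[OF sat' True ik(2) k(2) ik(4,5)] by blast
    next
      case False
      have "covered S k" using cov k ik(5) unfolding unpaired_covered_def by blast
      moreover have "i < p" if "(p, q) \<in> S" for p q using right[OF that] False by auto
      ultimately show ?thesis using crossed_from_left[of S i k] by blast
    qed
  qed
qed

lemma unpaired_prefix:
  assumes "d = 1 \<or> d = 2" and "2 \<le> n"
  shows "saturated_on a n S \<and> unpaired S a \<and> (unpaired S (a + 1) \<longleftrightarrow> d = 2) \<longleftrightarrow>
         saturated_covered (a + d) (n - d) S"
  using drop_unpaired_prefix[OF assms] extend_by_unpaired_prefix[OF assms] by blast

section \<open>The first position is paired\<close>

lemma first_arc:
  assumes S: "struct_on a n S" and paired: "\<not> unpaired S a"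
  obtains m where "1 \<le> m" "m + 2 \<le> n" "(a, a + m + 1) \<in> S"
proof -
  obtain p q where pq: "(p, q) \<in> S" "p = a \<or> q = a" using paired unfolding unpaired_def by auto
  with struct_onD[OF S pq(1)] have "p = a" "a + 1 < q" "q < a + n" by auto
  then show ?thesis using that[of "q - a - 1"] pq(1) by auto
qed

lemma first_arc_unique:
  "struct_on a n S \<Longrightarrow> (a, a + m + 1) \<in> S \<Longrightarrow> (a, a + m' + 1) \<in> S \<Longrightarrow> m = m'"
  using struct_on_disjoint[of a n S a "a + m + 1" a "a + m' + 1"] by auto

definition arcs_within :: "nat \<Rightarrow> nat \<Rightarrow> (nat \<times> nat) set \<Rightarrow> (nat \<times> nat) set" where
  "arcs_within b l S = {x \<in> S. b \<le> fst x \<and> snd x < b + l}"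

lemma mem_arcs_within [simp]: "(p, q) \<in> arcs_within b l S \<longleftrightarrow> (p, q) \<in> S \<and> b \<le> p \<and> q < b + l"
  by (simp add: arcs_within_def)

lemma saturated_on_arcs_within:
  assumes sat: "saturated_on a n S" and "a \<le> b" "b + l \<le> a + n"
    and closed: "\<And>p q. (p, q) \<in> S \<Longrightarrow> (b \<le> p \<and> p < b + l \<longleftrightarrow> b \<le> q \<and> q < b + l)"
  shows "saturated_on b l (arcs_within b l S)"
proof -
  let ?T = "arcs_within b l S"
  have S: "struct_on a n S" using sat by (rule saturated_on_struct)
  have T: "struct_on b l ?T" by (rule struct_on_mono[OF S]) (auto simp: arcs_within_def)
  have unpaired: "unpaired S x" if x: "b \<le> x" "x < b + l" "unpaired ?T x" for x
  proof -
    have "p \<noteq> x \<and> q \<noteq> x" if pq: "(p, q) \<in> S" for p q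
    proof -
      have "p = x \<or> q = x \<Longrightarrow> (p, q) \<in> ?T" using closed[OF pq] x(1,2) struct_onD[OF S pq] pq by auto
      moreover have "(p, q) \<in> ?T \<Longrightarrow> p \<noteq> x \<and> q \<noteq> x" using x(3) unfolding unpaired_def by blast
      ultimately show ?thesis by blast
    qed
    then show ?thesis unfolding unpaired_def by blast
  qed
  have crossed: "crossed ?T i k" if ik: "b \<le> i" "k < b + l" "crossed S i k" for i k
  proof -
    obtain p q where pq: "(p, q) \<in> S" "(p < i \<and> i < q \<and> q < k) \<or> (i < p \<and> p < k \<and> k < q)"
      using ik(3) unfolding crossed_def by blast
    then have "(p, q) \<in> ?T" using closed[OF pq(1)] ik(1,2) by auto
    with pq(2) show ?thesis unfolding crossed_def by blast
  qed
  show ?thesis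
  proof (rule saturated_onI[OF T])
    fix i k assume "b \<le> i" "i + 1 < k" "k < b + l" "unpaired ?T i" "unpaired ?T k"
    then show "crossed ?T i k"
      using crossed saturated_onD[OF sat _ _ _ unpaired unpaired] assms(2,3) by auto
  qed
qed

definition glue :: "nat \<Rightarrow> nat \<Rightarrow> (nat \<times> nat) set \<Rightarrow> (nat \<times> nat) set \<Rightarrow> (nat \<times> nat) set" where
  "glue a j S1 S2 = insert (a, j) (S1 \<union> S2)"

lemma split_at_first_arc:
  assumes sat: "saturated_on a (m + k + 2) S" and arc: "(a, a + m + 1) \<in> S"
  shows "S = glue a (a + m + 1) (arcs_within (a + 1) m S) (arcs_within (a + m + 2) k S)"
    and "saturated_on (a + 1) m (arcs_within (a + 1) m S)"
    and "saturated_on (a + m + 2) k (arcs_within (a + m + 2) k S)"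
proof -
  define j where "j = a + m + 1"
  have S: "struct_on a (m + k + 2) S" using sat by (rule saturated_on_struct)
  have other: "(a < p \<and> q < j) \<or> j < p" if "(p, q) \<in> S" "(p, q) \<noteq> (a, j)" for p q
  proof -
    have "a \<noteq> p \<and> a \<noteq> q \<and> j \<noteq> p \<and> j \<noteq> q"
      using struct_on_disjoint[OF S arc[folded j_def] that(1)] that(2) by auto
    moreover have "a \<le> p" "p + 1 < q" using struct_onD[OF S that(1)] by auto
    moreover have "\<not> (a < p \<and> p < j \<and> j < q)"
      using struct_on_noncrossing[OF S arc[folded j_def] that(1)] .
    ultimately show ?thesis by linarith
  qed
  have bound: "p < q" "q < a + m + k + 2" if "(p, q) \<in> S" for p q
    using struct_onD[OF S that] by auto
  show "S = glue a (a + m + 1) (arcs_within (a + 1) m S) (arcs_within (a + m + 2) k S)"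
  proof (intro subset_antisym subrelI)
    fix p q assume "(p, q) \<in> S"
    then show "(p, q) \<in> glue a (a + m + 1) (arcs_within (a + 1) m S) (arcs_within (a + m + 2) k S)"
      using other[of p q] bound[of p q] unfolding glue_def j_def by auto
  qed (use arc in \<open>auto simp: glue_def arcs_within_def\<close>)
  show "saturated_on (a + 1) m (arcs_within (a + 1) m S)"
  proof (rule saturated_on_arcs_within[OF sat])
    fix p q assume "(p, q) \<in> S"
    then show "a + 1 \<le> p \<and> p < a + 1 + m \<longleftrightarrow> a + 1 \<le> q \<and> q < a + 1 + m"
      using other[of p q] bound[of p q] unfolding j_def by (cases "(p, q) = (a, a + m + 1)") auto
  qed auto
  show "saturated_on (a + m + 2) k (arcs_within (a + m + 2) k S)"
  proof (rule saturated_on_arcs_within[OF sat])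
    fix p q assume "(p, q) \<in> S"
    then show "a + m + 2 \<le> p \<and> p < a + m + 2 + k \<longleftrightarrow> a + m + 2 \<le> q \<and> q < a + m + 2 + k"
      using other[of p q] bound[of p q] unfolding j_def by (cases "(p, q) = (a, a + m + 1)") auto
  qed auto
qed

lemma glue_struct_on:
  assumes m: "1 \<le> m" and S1: "struct_on (a + 1) m S1" and S2: "struct_on (a + m + 2) k S2"
  shows "struct_on a (m + k + 2) (glue a (a + m + 1) S1 S2)"
proof -
  let ?S = "glue a (a + m + 1) S1 S2"
  have loc: "(p, q) = (a, a + m + 1) \<or>
      ((p, q) \<in> S1 \<and> a + 1 \<le> p \<and> p + 1 < q \<and> q < a + m + 1) \<or>
      ((p, q) \<in> S2 \<and> a + m + 2 \<le> p \<and> p + 1 < q \<and> q < a + m + k + 2)"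
    if "(p, q) \<in> ?S" for p q
    using that struct_onD[OF S1, of p q] struct_onD[OF S2, of p q] unfolding glue_def by auto
  show ?thesis
  proof (rule struct_onI)
    fix p q assume "(p, q) \<in> ?S"
    from loc[OF this] show "a \<le> p \<and> p + 1 < q \<and> q < a + (m + k + 2)" using m by auto
  next
    fix p q r t assume A: "(p, q) \<in> ?S" "(r, t) \<in> ?S" "(p, q) \<noteq> (r, t)"
    show "p \<noteq> r \<and> p \<noteq> t \<and> q \<noteq> r \<and> q \<noteq> t"
      using loc[OF A(1)] loc[OF A(2)] A(3)
        struct_on_disjoint[OF S1, of p q r t] struct_on_disjoint[OF S2, of p q r t] by auto
  next
    fix p q r t assume A: "(p, q) \<in> ?S" "(r, t) \<in> ?S"
    show "\<not> (p < r \<and> r < q \<and> q < t)"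
      using loc[OF A(1)] loc[OF A(2)]
        struct_on_noncrossing[OF S1, of p q r t] struct_on_noncrossing[OF S2, of p q r t] by auto
  qed
qed

lemma glue_saturated:
  assumes m: "1 \<le> m" and sat1: "saturated_on (a + 1) m S1" and sat2: "saturated_on (a + m + 2) k S2"
  shows "saturated_on a (m + k + 2) (glue a (a + m + 1) S1 S2)"
proof -
  define j where "j = a + m + 1"
  let ?S = "glue a j S1 S2"
  have sub1: "S1 \<subseteq> ?S" and sub2: "S2 \<subseteq> ?S" and arc: "(a, j) \<in> ?S" unfolding glue_def by auto
  have S: "struct_on a (m + k + 2) ?S"
    unfolding j_def using glue_struct_on[OF m] sat1 sat2 by (simp add: saturated_on_struct)
  have "saturated_on a (m + k + 2) ?S"
  proof (rule saturated_onI[OF S])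
    fix x y assume xy: "a \<le> x" "x + 1 < y" "y < a + (m + k + 2)" "unpaired ?S x" "unpaired ?S y"
    have ne: "x \<noteq> a" "x \<noteq> j" "y \<noteq> j" using xy(4,5) arc unfolding unpaired_def by auto
    show "crossed ?S x y"
    proof (cases "y < j")
      case True
      then have "crossed S1 x y"
        using saturated_onD[OF sat1 _ xy(2) _ unpaired_mono[OF xy(4) sub1] unpaired_mono[OF xy(5) sub1]]
          xy(1) ne(1) j_def by auto
      then show ?thesis using crossed_mono[OF _ sub2] crossed_mono[OF _ sub1] by blast
    next
      case False
      show ?thesis
      proof (cases "j < x")
        case True
        then have "crossed S2 x y"
          using saturated_onD[OF sat2 _ xy(2) _ unpaired_mono[OF xy(4) sub2] unpaired_mono[OF xy(5) sub2]]
            xy(3) j_def by auto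
        then show ?thesis using crossed_mono[OF _ sub2] by blast
      next
        case x_before: False
        have "a < x \<and> x < j \<and> j < y" using x_before False ne xy(1) by auto
        then show ?thesis using arc unfolding crossed_def by blast
      qed
    qed
  qed
  then show ?thesis unfolding j_def .
qed

text \<open>Positions inside the arc are covered, so the glued structure belongs to the auxiliary class
  exactly when the right-hand piece does.\<close>

lemma glue_unpaired_covered:
  assumes m: "1 \<le> m" and S1: "struct_on (a + 1) m S1" and S2: "struct_on (a + m + 2) k S2"
  shows "unpaired_covered a (m + k + 2) (glue a (a + m + 1) S1 S2) \<longleftrightarrow>
         unpaired_covered (a + m + 2) k S2"
proof -
  define j where "j = a + m + 1"
  let ?S = "glue a j S1 S2"
  have outer: "unpaired ?S x \<longleftrightarrow> unpaired S2 x" "covered ?S x \<longleftrightarrow> covered S2 x" if "j < x" for x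
  proof -
    have left: "p < x \<and> q < x" if "(p, q) \<in> S1" for p q
      using struct_onD[OF S1 that] \<open>j < x\<close> j_def by simp
    have "a < x" using \<open>j < x\<close> j_def by simp
    then show "unpaired ?S x \<longleftrightarrow> unpaired S2 x" "covered ?S x \<longleftrightarrow> covered S2 x"
      using that unfolding unpaired_def covered_def glue_def by (auto dest: left)
  qed
  show ?thesis
  proof
    assume cov: "unpaired_covered a (m + k + 2) (glue a (a + m + 1) S1 S2)"
    show "unpaired_covered (a + m + 2) k S2"
      unfolding unpaired_covered_def
    proof (intro allI impI)
      fix x assume x: "a + m + 2 \<le> x" "x < a + m + 2 + k" "unpaired S2 x"
      then have "j < x" using j_def by simp
      then show "covered S2 x" using cov x outer[OF \<open>j < x\<close>] unfolding unpaired_covered_def j_def by auto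
    qed
  next
    assume cov: "unpaired_covered (a + m + 2) k S2"
    show "unpaired_covered a (m + k + 2) (glue a (a + m + 1) S1 S2)"
      unfolding unpaired_covered_def j_def[symmetric]
    proof (intro allI impI)
      fix x assume x: "a \<le> x" "x < a + (m + k + 2)" "unpaired ?S x"
      have arc: "(a, j) \<in> ?S" unfolding glue_def by simp
      then have "x \<noteq> a" "x \<noteq> j" using x(3) unfolding unpaired_def by auto
      show "covered ?S x"
      proof (cases "x < j")
        case True
        then have "a < x \<and> x < j" using \<open>x \<noteq> a\<close> x(1) by simp
        then show ?thesis using arc unfolding covered_def by blast
      next
        case False
        then have "j < x" using \<open>x \<noteq> j\<close> by simp
        then show ?thesis using cov x outer[OF \<open>j < x\<close>] unfolding unpaired_covered_def j_def by auto
      qed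
    qed
  qed
qed

lemma glue_parts:
  assumes S1: "struct_on (a + 1) m S1" and S2: "struct_on (a + m + 2) k S2"
  shows "arcs_within (a + 1) m (glue a (a + m + 1) S1 S2) = S1"
    and "arcs_within (a + m + 2) k (glue a (a + m + 1) S1 S2) = S2"
proof -
  show "arcs_within (a + 1) m (glue a (a + m + 1) S1 S2) = S1"
  proof (intro subset_antisym subrelI)
    fix p q assume "(p, q) \<in> arcs_within (a + 1) m (glue a (a + m + 1) S1 S2)"
    then show "(p, q) \<in> S1" using struct_onD[OF S2, of p q] by (auto simp: glue_def)
  next
    fix p q assume "(p, q) \<in> S1"
    then show "(p, q) \<in> arcs_within (a + 1) m (glue a (a + m + 1) S1 S2)"
      using struct_onD[OF S1 \<open>(p, q) \<in> S1\<close>] by (auto simp: glue_def)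
  qed
  show "arcs_within (a + m + 2) k (glue a (a + m + 1) S1 S2) = S2"
  proof (intro subset_antisym subrelI)
    fix p q assume "(p, q) \<in> arcs_within (a + m + 2) k (glue a (a + m + 1) S1 S2)"
    then show "(p, q) \<in> S2" using struct_onD[OF S1, of p q] by (auto simp: glue_def)
  next
    fix p q assume "(p, q) \<in> S2"
    then show "(p, q) \<in> arcs_within (a + m + 2) k (glue a (a + m + 1) S1 S2)"
      using struct_onD[OF S2 \<open>(p, q) \<in> S2\<close>] by (auto simp: glue_def)
  qed
qed

lemma inj_on_glue:
  "inj_on (\<lambda>(S1, S2). glue a (a + m + 1) S1 S2)
     ({S1. struct_on (a + 1) m S1} \<times> {S2. struct_on (a + m + 2) k S2})"
proof (rule inj_onI)
  fix x y
  assume x: "x \<in> {S1. struct_on (a + 1) m S1} \<times> {S2. struct_on (a + m + 2) k S2}"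
    and y: "y \<in> {S1. struct_on (a + 1) m S1} \<times> {S2. struct_on (a + m + 2) k S2}"
    and eq: "(\<lambda>(S1, S2). glue a (a + m + 1) S1 S2) x = (\<lambda>(S1, S2). glue a (a + m + 1) S1 S2) y"
  obtain S1 S2 T1 T2 where xy: "x = (S1, S2)" "y = (T1, T2)" by fastforce
  with x y have "struct_on (a + 1) m S1" "struct_on (a + m + 2) k S2"
    "struct_on (a + 1) m T1" "struct_on (a + m + 2) k T2" by auto
  with eq xy show "x = y" using glue_parts by (metis case_prod_conv)
qed

lemma saturated_with_first_arc:
  assumes m: "1 \<le> m"
  shows "{S. saturated_on a (m + k + 2) S \<and> (a, a + m + 1) \<in> S} =
    (\<lambda>(S1, S2). glue a (a + m + 1) S1 S2) `
      ({S1. saturated_on (a + 1) m S1} \<times> {S2. saturated_on (a + m + 2) k S2})"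
proof (intro subset_antisym subsetI)
  fix S assume "S \<in> {S. saturated_on a (m + k + 2) S \<and> (a, a + m + 1) \<in> S}"
  then have sat: "saturated_on a (m + k + 2) S" and arc: "(a, a + m + 1) \<in> S" by auto
  show "S \<in> (\<lambda>(S1, S2). glue a (a + m + 1) S1 S2) `
      ({S1. saturated_on (a + 1) m S1} \<times> {S2. saturated_on (a + m + 2) k S2})"
    using split_at_first_arc[OF sat arc]
    by (intro image_eqI[of _ _ "(arcs_within (a + 1) m S, arcs_within (a + m + 2) k S)"]) auto
next
  fix S assume "S \<in> (\<lambda>(S1, S2). glue a (a + m + 1) S1 S2) `
      ({S1. saturated_on (a + 1) m S1} \<times> {S2. saturated_on (a + m + 2) k S2})"
  then show "S \<in> {S. saturated_on a (m + k + 2) S \<and> (a, a + m + 1) \<in> S}"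
    using glue_saturated[OF m] by (auto simp: glue_def)
qed

lemma saturated_covered_with_first_arc:
  assumes m: "1 \<le> m"
  shows "{S. saturated_covered a (m + k + 2) S \<and> (a, a + m + 1) \<in> S} =
    (\<lambda>(S1, S2). glue a (a + m + 1) S1 S2) `
      ({S1. saturated_on (a + 1) m S1} \<times> {S2. saturated_covered (a + m + 2) k S2})"
proof (intro subset_antisym subsetI)
  fix S assume "S \<in> {S. saturated_covered a (m + k + 2) S \<and> (a, a + m + 1) \<in> S}"
  then have sat: "saturated_on a (m + k + 2) S" and cov: "unpaired_covered a (m + k + 2) S"
    and arc: "(a, a + m + 1) \<in> S" by (auto simp: saturated_covered_def)
  note parts = split_at_first_arc[OF sat arc]
  have "unpaired_covered (a + m + 2) k (arcs_within (a + m + 2) k S)"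
    using glue_unpaired_covered[OF m parts(2,3)[THEN saturated_on_struct]] cov parts(1) by simp
  then show "S \<in> (\<lambda>(S1, S2). glue a (a + m + 1) S1 S2) `
      ({S1. saturated_on (a + 1) m S1} \<times> {S2. saturated_covered (a + m + 2) k S2})"
    using parts
    by (intro image_eqI[of _ _ "(arcs_within (a + 1) m S, arcs_within (a + m + 2) k S)"])
       (auto simp: saturated_covered_def)
next
  fix S assume "S \<in> (\<lambda>(S1, S2). glue a (a + m + 1) S1 S2) `
      ({S1. saturated_on (a + 1) m S1} \<times> {S2. saturated_covered (a + m + 2) k S2})"
  then obtain S1 S2 where S: "S = glue a (a + m + 1) S1 S2"
    and sat1: "saturated_on (a + 1) m S1" and cov2: "saturated_covered (a + m + 2) k S2" by auto
  then have "saturated_on a (m + k + 2) S" "unpaired_covered a (m + k + 2) S"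
    using glue_saturated[OF m] glue_unpaired_covered[OF m] saturated_on_struct
    by (auto simp: saturated_covered_def)
  then show "S \<in> {S. saturated_covered a (m + k + 2) S \<and> (a, a + m + 1) \<in> S}"
    using S by (simp add: saturated_covered_def glue_def)
qed

section \<open>Recursions for the counts\<close>

definition count_sat :: "nat \<Rightarrow> nat \<Rightarrow> nat" where
  "count_sat a n = card {S. saturated_on a n S}"

definition count_cov :: "nat \<Rightarrow> nat \<Rightarrow> nat" where
  "count_cov a n = card {S. saturated_covered a n S}"

lemma finite_saturated: "finite {S. saturated_on a n S \<and> P S}"
  by (rule finite_subset[OF _ finite_struct_on[of a n]]) (auto simp: saturated_on_struct)

lemma card_saturated_with_first_arc:
  assumes m: "1 \<le> m"
  shows "card {S. saturated_on a (m + k + 2) S \<and> (a, a + m + 1) \<in> S} =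
         count_sat (a + 1) m * count_sat (a + m + 2) k"
proof -
  have "inj_on (\<lambda>(S1, S2). glue a (a + m + 1) S1 S2)
      ({S1. saturated_on (a + 1) m S1} \<times> {S2. saturated_on (a + m + 2) k S2})"
    by (rule inj_on_subset[OF inj_on_glue[of a m k]]) (auto simp: saturated_on_struct)
  then show ?thesis
    unfolding saturated_with_first_arc[OF m] count_sat_def
    by (simp add: card_image card_cartesian_product)
qed

lemma card_saturated_covered_with_first_arc:
  assumes m: "1 \<le> m"
  shows "card {S. saturated_covered a (m + k + 2) S \<and> (a, a + m + 1) \<in> S} =
         count_sat (a + 1) m * count_cov (a + m + 2) k"
proof -
  have "inj_on (\<lambda>(S1, S2). glue a (a + m + 1) S1 S2)
      ({S1. saturated_on (a + 1) m S1} \<times> {S2. saturated_covered (a + m + 2) k S2})"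
    by (rule inj_on_subset[OF inj_on_glue[of a m k]]) (auto simp: saturated_on_struct saturated_covered_def)
  then show ?thesis
    unfolding saturated_covered_with_first_arc[OF m] count_sat_def count_cov_def
    by (simp add: card_image card_cartesian_product)
qed

lemma card_by_first_arc:
  assumes fin: "finite \<S>" and paired: "\<And>S. S \<in> \<S> \<Longrightarrow> struct_on a n S \<and> \<not> unpaired S a"
  shows "card \<S> = (\<Sum>m = 1..n - 2. card {S \<in> \<S>. (a, a + m + 1) \<in> S})"
proof -
  have "\<S> = (\<Union>m \<in> {1..n - 2}. {S \<in> \<S>. (a, a + m + 1) \<in> S})"
  proof (intro subset_antisym subsetI)
    fix S assume "S \<in> \<S>"
    then obtain m where "1 \<le> m" "m + 2 \<le> n" "(a, a + m + 1) \<in> S"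
      using paired first_arc by metis
    with \<open>S \<in> \<S>\<close> show "S \<in> (\<Union>m \<in> {1..n - 2}. {S \<in> \<S>. (a, a + m + 1) \<in> S})" by auto
  qed auto
  also have "card \<dots> = (\<Sum>m = 1..n - 2. card {S \<in> \<S>. (a, a + m + 1) \<in> S})"
  proof (rule card_UN_disjoint)
    show "\<forall>i \<in> {1..n - 2}. \<forall>j \<in> {1..n - 2}. i \<noteq> j \<longrightarrow>
        {S \<in> \<S>. (a, a + i + 1) \<in> S} \<inter> {S \<in> \<S>. (a, a + j + 1) \<in> S} = {}"
      using paired first_arc_unique by blast
  qed (use fin in auto)
  finally show ?thesis .
qed

text \<open>Members of the auxiliary class pair their first position, with anything inside the arc
  and another member of the auxiliary class to its right.\<close>

lemma count_cov_rec:
  assumes "1 \<le> n"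
  shows "count_cov a n = (\<Sum>m = 1..n - 2. count_sat (a + 1) m * count_cov (a + m + 2) (n - m - 2))"
proof -
  have "count_cov a n = (\<Sum>m = 1..n - 2. card {S \<in> {S. saturated_covered a n S}. (a, a + m + 1) \<in> S})"
    unfolding count_cov_def
  proof (rule card_by_first_arc)
    show "finite {S. saturated_covered a n S}"
      using finite_saturated[of a n "unpaired_covered a n"] by (simp add: saturated_covered_def)
  qed (use first_position_paired assms in \<open>auto simp: saturated_covered_def saturated_on_struct\<close>)
  also have "\<dots> = (\<Sum>m = 1..n - 2. count_sat (a + 1) m * count_cov (a + m + 2) (n - m - 2))"
  proof (rule sum.cong[OF refl])
    fix m assume "m \<in> {1..n - 2}"
    then have m: "1 \<le> m" and n: "m + (n - m - 2) + 2 = n" by auto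
    show "card {S \<in> {S. saturated_covered a n S}. (a, a + m + 1) \<in> S} =
        count_sat (a + 1) m * count_cov (a + m + 2) (n - m - 2)"
      using card_saturated_covered_with_first_arc[OF m, of a "n - m - 2"] unfolding n by simp
  qed
  finally show ?thesis .
qed

text \<open>The three cases for the first position of a saturated structure.\<close>

lemma count_sat_rec:
  assumes n: "2 \<le> n"
  shows "count_sat a n = count_cov (a + 1) (n - 1) + count_cov (a + 2) (n - 2) +
           (\<Sum>m = 1..n - 2. count_sat (a + 1) m * count_sat (a + m + 2) (n - m - 2))"
proof -
  let ?A = "{S. saturated_on a n S}"
  let ?paired = "{S \<in> ?A. \<not> unpaired S a}"
  have one: "saturated_on a n S \<and> unpaired S a \<and> \<not> unpaired S (a + 1) \<longleftrightarrow>
      saturated_covered (a + 1) (n - 1) S" for S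
    using unpaired_prefix[of 1 n a S] n by simp
  have two: "saturated_on a n S \<and> unpaired S a \<and> unpaired S (a + 1) \<longleftrightarrow>
      saturated_covered (a + 2) (n - 2) S" for S
    using unpaired_prefix[of 2 n a S] n by simp
  let ?X = "{S. saturated_covered (a + 1) (n - 1) S}" and ?Y = "{S. saturated_covered (a + 2) (n - 2) S}"
  have fin: "finite ?X" "finite ?Y" "finite ?paired"
    using finite_saturated[of "a + 1" "n - 1" "unpaired_covered (a + 1) (n - 1)"]
      finite_saturated[of "a + 2" "n - 2" "unpaired_covered (a + 2) (n - 2)"]
      finite_saturated[of a n "\<lambda>S. \<not> unpaired S a"]
    by (simp_all add: saturated_covered_def)
  have disj: "?X \<inter> ?Y = {}" "(?X \<union> ?Y) \<inter> ?paired = {}" using one two by blast+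
  have "count_sat a n = card (?X \<union> ?Y \<union> ?paired)"
    unfolding count_sat_def using one two by (intro arg_cong[where f = card]) blast
  also have "\<dots> = card (?X \<union> ?Y) + card ?paired"
    by (rule card_Un_disjoint) (use fin disj in auto)
  also have "card (?X \<union> ?Y) = count_cov (a + 1) (n - 1) + count_cov (a + 2) (n - 2)"
    unfolding count_cov_def by (rule card_Un_disjoint) (use fin disj in auto)
  also have "card ?paired = (\<Sum>m = 1..n - 2. card {S \<in> ?paired. (a, a + m + 1) \<in> S})"
    by (rule card_by_first_arc) (auto simp: finite_saturated saturated_on_struct)
  also have "\<dots> = (\<Sum>m = 1..n - 2. count_sat (a + 1) m * count_sat (a + m + 2) (n - m - 2))"
  proof (rule sum.cong[OF refl])
    fix m assume "m \<in> {1..n - 2}"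
    then have m: "1 \<le> m" and n: "m + (n - m - 2) + 2 = n" by auto
    have "{S \<in> ?paired. (a, a + m + 1) \<in> S} = {S. saturated_on a n S \<and> (a, a + m + 1) \<in> S}"
      unfolding unpaired_def by auto
    then show "card {S \<in> ?paired. (a, a + m + 1) \<in> S} =
        count_sat (a + 1) m * count_sat (a + m + 2) (n - m - 2)"
      using card_saturated_with_first_arc[OF m, of a "n - m - 2"] unfolding n by simp
  qed
  finally show ?thesis .
qed

lemma count_sat_short: "n \<le> 1 \<Longrightarrow> count_sat a n = 1"
proof -
  assume "n \<le> 1"
  then have "{S. saturated_on a n S} = {{}}" using saturated_on_short by auto
  then show ?thesis by (simp add: count_sat_def)
qed

lemma count_cov_empty: "count_cov a 0 = 1"
proof -
  have "{S. saturated_covered a 0 S} = {{}}"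
    using saturated_on_short[of 0 a] by (auto simp: saturated_covered_def unpaired_covered_def)
  then show ?thesis by (simp add: count_cov_def)
qed

text \<open>The counts depend only on the length of the interval: both sides satisfy the same
  recursions with the same initial values.\<close>

lemma counts_translation_invariant: "count_sat a n = count_sat b n \<and> count_cov a n = count_cov b n"
proof (induction n arbitrary: a b rule: less_induct)
  case (less n)
  have IH: "count_sat a' m = count_sat b' m" "count_cov a' m = count_cov b' m" if "m < n" for m a' b'
    using less.IH[OF that] by blast+
  have "count_cov a n = count_cov b n"
  proof (cases "n = 0")
    case False
    then have "1 \<le> n" by simp
    then show ?thesis unfolding count_cov_rec[OF \<open>1 \<le> n\<close>]
      by (intro sum.cong refl arg_cong2[where f = "(*)"] IH) auto
  qed (simp add: count_cov_empty)
  moreover have "count_sat a n = count_sat b n"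
  proof (cases "n \<le> 1")
    case False
    then have "2 \<le> n" by simp
    then show ?thesis unfolding count_sat_rec[OF \<open>2 \<le> n\<close>]
      by (intro arg_cong2[where f = "(+)"] sum.cong refl arg_cong2[where f = "(*)"] IH) auto
  qed (simp add: count_sat_short)
  ultimately show ?case by blast
qed

lemma count_sat_shift: "count_sat a n = count_sat b n"
  and count_cov_shift: "count_cov a n = count_cov b n"
  using counts_translation_invariant by blast+

lemma num_saturated_count: "num_saturated n = count_sat 1 n"
  by (simp add: num_saturated_def count_sat_def saturated_iff)

lemma num_saturated_rec:
  assumes "2 \<le> n"
  shows "num_saturated n = count_cov 1 (n - 1) + count_cov 1 (n - 2) +
           (\<Sum>m = 1..n - 2. num_saturated m * num_saturated (n - m - 2))"
  unfolding num_saturated_count count_sat_rec[OF assms, of 1]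
  by (intro arg_cong2[where f = "(+)"] sum.cong refl arg_cong2[where f = "(*)"]
      count_sat_shift count_cov_shift)

lemma count_cov_rec_1:
  assumes "1 \<le> n"
  shows "count_cov 1 n = (\<Sum>m = 1..n - 2. num_saturated m * count_cov 1 (n - m - 2))"
  unfolding num_saturated_count count_cov_rec[OF assms, of 1]
  by (intro sum.cong refl arg_cong2[where f = "(*)"] count_sat_shift count_cov_shift)

lemma num_saturated_short: "num_saturated 0 = 1" "num_saturated 1 = 1"
  by (simp_all add: num_saturated_count count_sat_short)

lemma count_cov_1: "count_cov 1 1 = 0"
  using count_cov_rec_1[of 1] by simp

section \<open>Generating functions\<close>

unbundle fps_syntax

definition cov_gf :: "int fps" where
  "cov_gf = Abs_fps (\<lambda>n. int (count_cov 1 n))"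

lemma one_plus_sat_gf_nth: "(1 + sat_gf) $ n = int (num_saturated n)"
  by (simp add: sat_gf_def num_saturated_short)

lemma sat_gf_mult_nth: "(sat_gf * G) $ n = (\<Sum>i = 1..n. int (num_saturated i) * G $ (n - i))"
proof -
  have "(sat_gf * G) $ n = (\<Sum>i = 0..n. sat_gf $ i * G $ (n - i))" by (rule fps_mult_nth)
  also have "\<dots> = (\<Sum>i = 1..n. sat_gf $ i * G $ (n - i))"
    by (simp add: sum.atLeast_Suc_atMost sat_gf_def)
  also have "\<dots> = (\<Sum>i = 1..n. int (num_saturated i) * G $ (n - i))"
    by (intro sum.cong) (auto simp: sat_gf_def)
  finally show ?thesis .
qed

lemma cov_gf_equation: "cov_gf = 1 + fps_X ^ 2 * (sat_gf * cov_gf)"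
proof (rule fps_ext)
  fix n
  show "cov_gf $ n = (1 + fps_X ^ 2 * (sat_gf * cov_gf)) $ n"
  proof (cases "n < 2")
    case True
    then consider "n = 0" | "n = 1" by linarith
    then show ?thesis
      by cases (simp_all add: cov_gf_def count_cov_empty count_cov_1[unfolded One_nat_def]
          fps_X_power_mult_nth)
  next
    case False
    have "(1 + fps_X ^ 2 * (sat_gf * cov_gf)) $ n =
        (\<Sum>i = 1..n - 2. int (num_saturated i) * int (count_cov 1 (n - 2 - i)))"
      using False by (simp add: fps_X_power_mult_nth sat_gf_mult_nth cov_gf_def)
    also have "\<dots> = int (count_cov 1 n)"
      using count_cov_rec_1[of n] False by (simp add: of_nat_sum diff_diff_eq add.commute)
    finally show ?thesis by (simp add: cov_gf_def)
  qed
qed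

lemma sat_gf_equation:
  "1 + sat_gf = 1 + fps_X ^ 2 * (sat_gf * (1 + sat_gf)) + (fps_X + fps_X ^ 2) * cov_gf"
proof (rule fps_ext)
  fix n
  show "(1 + sat_gf) $ n = (1 + fps_X ^ 2 * (sat_gf * (1 + sat_gf)) + (fps_X + fps_X ^ 2) * cov_gf) $ n"
  proof (cases "n < 2")
    case True
    then consider "n = 0" | "n = 1" by linarith
    then show ?thesis
      by cases (simp_all add: cov_gf_def count_cov_empty sat_gf_def
          num_saturated_short[unfolded One_nat_def] fps_X_power_mult_nth distrib_right)
  next
    case False
    have square: "(sat_gf * (1 + sat_gf)) $ k = (\<Sum>i = 1..k. int (num_saturated i) * int (num_saturated (k - i)))"
      for k by (simp only: sat_gf_mult_nth one_plus_sat_gf_nth)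
    have "(1 + fps_X ^ 2 * (sat_gf * (1 + sat_gf)) + (fps_X + fps_X ^ 2) * cov_gf) $ n =
        (\<Sum>i = 1..n - 2. int (num_saturated i) * int (num_saturated (n - 2 - i))) +
        int (count_cov 1 (n - 1)) + int (count_cov 1 (n - 2))"
      using False
      by (simp add: fps_X_power_mult_nth square cov_gf_def distrib_right)
    also have "\<dots> = int (num_saturated n)"
      using num_saturated_rec[of n] False by (simp add: of_nat_sum algebra_simps diff_diff_eq add.commute)
    finally show ?thesis by (simp only: one_plus_sat_gf_nth)
  qed
qed

text \<open>Eliminating C: with A = X^2 S one has C (1 - A) = 1, hence
  (1 + S)(1 - A)^2 = (1 - A) + X + X^2, which expands to the claimed equation.\<close>

theorem mainTheorem5:
  shows "- (sat_gf ^ 3 * fps_X ^ 4) + fps_X * (1 + fps_X)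
           - sat_gf ^ 2 * fps_X ^ 2 * (fps_X ^ 2 - 2)
           + sat_gf * (fps_X ^ 2 - 1) = 0"
proof -
  define A :: "int fps" where "A = fps_X ^ 2 * sat_gf"
  have cov: "cov_gf * (1 - A) = 1"
    using cov_gf_equation unfolding A_def by algebra
  have sat: "(1 + sat_gf) * (1 - A) = 1 + (fps_X + fps_X ^ 2) * cov_gf"
    using sat_gf_equation unfolding A_def by algebra
  have "(1 + sat_gf) * (1 - A) ^ 2 = (1 - A) + (fps_X + fps_X ^ 2) * (cov_gf * (1 - A))"
    unfolding power2_eq_square mult.assoc[symmetric] sat by (simp add: algebra_simps)
  also have "\<dots> = (1 - A) + (fps_X + fps_X ^ 2)"
    unfolding cov by simp
  finally show ?thesis unfolding A_def by algebra
qed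

end
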